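(* Let $\ell>0$ and let $\xi:(\tau_{\min},\tau_{\max})\to\mathbb{R}^4$ be a worldline whose image is contained in a two-dimensional timelike plane $P$ of Minkowski spacetime. Then for every $\tau_0\in(\tau_{\min},\tau_{\max})$, in an inertial coordinate system (obtained from the original by an orthochronous Lorentz transformation) in which $\dot\xi^a(\tau_0)=\delta^a_0$, and for every $\sigma\in\{1,2,3\}$, the integral $$\int_0^\infty \frac{\big(\tanh\psi(\zeta,\xi(\tau_0))\,\mu^\sigma(\zeta,\xi(\tau_0))-\tanh\chi(\zeta,\xi(\tau_0))\,\nu^\sigma(\zeta,\xi(\tau_0))\big)\,J_2(\zeta/\ell)}{\Delta(\zeta,\xi(\tau_0))\,\zeta}\,d\zeta$$ is absolutely convergent.
   Context: Minkowski spacetime is $\mathbb{R}^4$ with inertial coordinates $(x^0,\dots,x^3)$ and metric $\eta_{ab}=\mathrm{diag}(-1,1,1,1)$ ($c=1$); spatial indices $\rho,\sigma,\kappa\in\{1,2,3\}$ are raised/lowered with $\delta_{\rho\sigma}$. $J_2$ is the Bessel function of the first kind of order 2. A worldline is an inextendible, future-oriented, timelike $C^\infty$ curve $\xi(\tau)$, $\tau\in(\tau_{\min},\tau_{\max})$ ($\tau_{\min}\in\mathbb{R}\cup\{-\infty\}$, $\tau_{\max}\in\mathbb{R}\cup\{+\infty\}$), parametrized by proper time: $\eta_{ab}\dot\xi^a\dot\xi^b=-1$. For events with $y$ in the chronological past of $x$ (i.e. $x-y$ timelike, future-pointing), $D(x-y)=\sqrt{-\eta_{ab}(x^a-y^a)(x^b-y^b)}$.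 For $x=\xi(\tau_0)$ and $\zeta\in(0,\infty)$, $\varpi(\zeta,x)$ is the unique $\tau\in(\tau_{\min},\tau_0)$ with $D(x-\xi(\tau))=\zeta$ (the map $\tau\mapsto D(x-\xi(\tau))$ is a strictly decreasing bijection from $(\tau_{\min},\tau_0)$ onto $(0,\infty)$). Define functions $\chi,\psi$ and spatial unit vectors $\nu,\mu$ (Euclidean norm 1) by $\dot\xi^a(\varpi(\zeta,x))=\cosh\chi(\zeta,x)\,\delta^a_0+\sinh\chi(\zeta,x)\,\nu^\rho(\zeta,x)\,\delta^a_\rho$ and $x^a-\xi^a(\varpi(\zeta,x))=\zeta\big(\cosh\psi(\zeta,x)\,\delta^a_0+\sinh\psi(\zeta,x)\,\mu^\rho(\zeta,x)\,\delta^a_\rho\big)$, and set $\Delta(\zeta,x)=1-\tanh\psi(\zeta,x)\tanh\chi(\zeta,x)\,\mu^\kappa(\zeta,x)\nu_\kappa(\zeta,x)$. *)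

theory Defs
  imports "HOL-Analysis.Analysis" "HOL-Library.Extended_Real"
begin

text \<open>Events of Minkowski spacetime: pairs (time component x^0, spatial part (x^1,x^2,x^3)).\<close>
type_synonym event = "real \<times> (real ^ 3)"

definition mink :: "event \<Rightarrow> event \<Rightarrow> real" where
  "mink u v = - fst u * fst v + snd u \<bullet> snd v"

definition e0 :: event where "e0 = (1, 0)"

definition besselJ2 :: "real \<Rightarrow> real" where
  "besselJ2 x = (\<Sum>m. (-1) ^ m / (fact m * fact (m + 2)) * (x / 2) ^ (2 * m + 2))"

definition mdist :: "event \<Rightarrow> real" where
  "mdist v = sqrt (- mink v v)"

definition dom_I :: "ereal \<Rightarrow> ereal \<Rightarrow> real set" where
  "dom_I a b = {t. a < ereal t \<and> ereal t < b}"

definition smooth_curve :: "ereal \<Rightarrow> ereal \<Rightarrow> (real \<Rightarrow> event) \<Rightarrow> bool" where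
  "smooth_curve a b \<xi> \<longleftrightarrow> (\<exists>Df :: nat \<Rightarrow> real \<Rightarrow> event.
     (\<forall>t\<in>dom_I a b. Df 0 t = \<xi> t) \<and>
     (\<forall>k. \<forall>t\<in>dom_I a b. (Df k has_vector_derivative Df (Suc k) t) (at t)))"

definition inextendible :: "ereal \<Rightarrow> ereal \<Rightarrow> (real \<Rightarrow> event) \<Rightarrow> bool" where
  "inextendible a b \<xi> \<longleftrightarrow>
     (\<forall>t. a = ereal t \<longrightarrow> \<not> (\<exists>L. (\<xi> \<longlongrightarrow> L) (at_right t))) \<and>
     (\<forall>t. b = ereal t \<longrightarrow> \<not> (\<exists>L. (\<xi> \<longlongrightarrow> L) (at_left t)))"

definition worldline :: "ereal \<Rightarrow> ereal \<Rightarrow> (real \<Rightarrow> event) \<Rightarrow> bool" where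
  "worldline a b \<xi> \<longleftrightarrow> a < b \<and> smooth_curve a b \<xi> \<and> inextendible a b \<xi> \<and>
     (\<forall>t\<in>dom_I a b. mink (vector_derivative \<xi> (at t)) (vector_derivative \<xi> (at t)) = -1
                     \<and> fst (vector_derivative \<xi> (at t)) > 0)"

definition timelike_plane :: "event set \<Rightarrow> bool" where
  "timelike_plane P \<longleftrightarrow> (\<exists>p u w. independent {u, w} \<and> u \<noteq> w \<and>
      (\<exists>s t. mink (s *\<^sub>R u + t *\<^sub>R w) (s *\<^sub>R u + t *\<^sub>R w) < 0) \<and>
      P = {p + s *\<^sub>R u + t *\<^sub>R w | s t. True})"

definition lorentz_orthochronous :: "(event \<Rightarrow> event) \<Rightarrow> bool" where
  "lorentz_orthochronous L \<longleftrightarrow> linear L \<and> (\<forall>u v. mink (L u) (L v) = mink u v) \<and> fst (L e0) > 0"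

definition varpi :: "ereal \<Rightarrow> (real \<Rightarrow> event) \<Rightarrow> real \<Rightarrow> real \<Rightarrow> real" where
  "varpi a \<xi> \<tau>0 \<zeta> = (THE \<tau>. a < ereal \<tau> \<and> \<tau> < \<tau>0 \<and> mdist (\<xi> \<tau>0 - \<xi> \<tau>) = \<zeta>)"

definition rap_dir :: "event \<Rightarrow> real \<times> (real ^ 3)" where
  "rap_dir v = (SOME (c, n). c \<ge> 0 \<and> norm n = 1 \<and> fst v = cosh c \<and> snd v = sinh c *\<^sub>R n)"

definition chi :: "ereal \<Rightarrow> (real \<Rightarrow> event) \<Rightarrow> real \<Rightarrow> real \<Rightarrow> real" where
  "chi a \<xi> \<tau>0 \<zeta> = fst (rap_dir (vector_derivative \<xi> (at (varpi a \<xi> \<tau>0 \<zeta>))))"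
definition nu :: "ereal \<Rightarrow> (real \<Rightarrow> event) \<Rightarrow> real \<Rightarrow> real \<Rightarrow> real ^ 3" where
  "nu a \<xi> \<tau>0 \<zeta> = snd (rap_dir (vector_derivative \<xi> (at (varpi a \<xi> \<tau>0 \<zeta>))))"
definition psi :: "ereal \<Rightarrow> (real \<Rightarrow> event) \<Rightarrow> real \<Rightarrow> real \<Rightarrow> real" where
  "psi a \<xi> \<tau>0 \<zeta> = fst (rap_dir ((1 / \<zeta>) *\<^sub>R (\<xi> \<tau>0 - \<xi> (varpi a \<xi> \<tau>0 \<zeta>))))"
definition mu :: "ereal \<Rightarrow> (real \<Rightarrow> event) \<Rightarrow> real \<Rightarrow> real \<Rightarrow> real ^ 3" where
  "mu a \<xi> \<tau>0 \<zeta> = snd (rap_dir ((1 / \<zeta>) *\<^sub>R (\<xi> \<tau>0 - \<xi> (varpi a \<xi> \<tau>0 \<zeta>))))"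

definition Delta :: "ereal \<Rightarrow> (real \<Rightarrow> event) \<Rightarrow> real \<Rightarrow> real \<Rightarrow> real" where
  "Delta a \<xi> \<tau>0 \<zeta> = 1 - tanh (psi a \<xi> \<tau>0 \<zeta>) * tanh (chi a \<xi> \<tau>0 \<zeta>) * (mu a \<xi> \<tau>0 \<zeta> \<bullet> nu a \<xi> \<tau>0 \<zeta>)"

end

theory Submission
  imports Defs "HOL-Real_Asymp.Real_Asymp"
begin

text \<open>
  In rest-frame coordinates at \<open>\<tau>0\<close> the plane of the worldline contains the time axis, so all
  separations and velocities along the worldline are spatially parallel to one unit vector \<open>n\<close>.
  Hence \<open>tanh \<psi> \<mu> = u n\<close> and \<open>tanh \<chi> \<nu> = v n\<close> with \<open>|u|, |v| < 1\<close>, \<open>\<Delta> = 1 - u v\<close>, and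
  \<open>|u - v| \<le> 1 - u v\<close> bounds the integrand by \<open>|J\<^sub>2(\<zeta>/\<ell>)|/\<zeta>\<close>. This majorant is integrable:
  \<open>J\<^sub>2(x)/x\<close> is bounded near \<open>0\<close>, and an energy estimate for \<open>\<surd>x J\<^sub>2(x)\<close>, which solves an
  oscillator equation with frequency tending to \<open>1\<close>, gives \<open>J\<^sub>2(x) = O(1/\<surd>x)\<close>. The integrand is
  continuous, hence measurable, because \<open>\<zeta> \<mapsto> \<varpi>(\<zeta>)\<close> inverts the continuous, strictly
  decreasing proper distance to \<open>\<xi>(\<tau>0)\<close>, which is unbounded by inextendibility.
\<close>

section \<open>The Bessel function \<open>J\<^sub>2\<close>\<close>

definition J2_coeff :: "nat \<Rightarrow> real" where
  "J2_coeff m = (-1) ^ m / (fact m * fact (m + 2))"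

definition J2_series :: "nat \<Rightarrow> real \<Rightarrow> real" where
  "J2_series k z = (\<Sum>m. (diffs ^^ k) J2_coeff m * z ^ m)"

lemma summable_J2_coeff: "summable (\<lambda>m. J2_coeff m * z ^ m)"
proof (rule summable_comparison_test[OF _ summable_exp[of "\<bar>z\<bar>"]])
  have "\<bar>J2_coeff m * z ^ m\<bar> \<le> inverse (fact m) * \<bar>z\<bar> ^ m" for m
  proof -
    have "\<bar>J2_coeff m * z ^ m\<bar> = \<bar>z\<bar> ^ m / (fact m * fact (m + 2))"
      by (simp add: J2_coeff_def abs_mult power_abs)
    also have "\<dots> \<le> \<bar>z\<bar> ^ m / fact m"
      using fact_ge_1[of "m + 2", where 'a=real]
      by (intro divide_left_mono) (auto simp: mult_le_cancel_left1 simp del: fact_Suc)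
    finally show ?thesis by (simp add: divide_inverse mult.commute)
  qed
  then show "\<exists>N. \<forall>m\<ge>N. norm (J2_coeff m * z ^ m) \<le> inverse (fact m) * \<bar>z\<bar> ^ m"
    by simp
qed

lemma summable_J2_series: "summable (\<lambda>m. (diffs ^^ k) J2_coeff m * z ^ m)"
  by (induction k arbitrary: z) (auto intro: termdiff_converges_all summable_J2_coeff)

lemma has_real_derivative_J2_series:
  "(J2_series k has_real_derivative J2_series (Suc k) z) (at z)"
  unfolding J2_series_def funpow.simps o_apply
  by (rule termdiffs_strong_converges_everywhere) (rule summable_J2_series)

lemma J2_coeff_Suc: "(real k + 1) * (real k + 3) * J2_coeff (Suc k) = - J2_coeff k"
proof -
  define D :: real where "D = fact k * fact (k + 2)"
  have "D > 0" by (simp add: D_def)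
  have "fact (Suc k) * fact (Suc k + 2) = ((real k + 1) * (real k + 3)) * D"
    by (simp add: D_def algebra_simps)
  then have "J2_coeff (Suc k) = (-1) ^ Suc k / (((real k + 1) * (real k + 3)) * D)"
    by (simp only: J2_coeff_def)
  moreover have "J2_coeff k = (-1) ^ k / D" by (simp add: J2_coeff_def D_def)
  moreover have "(real k + 1) * (real k + 3) \<noteq> 0" by simp
  ultimately show ?thesis by (simp only: mult_divide_mult_cancel_left_if) simp
qed

lemma J2_series_ode: "z * J2_series 2 z + 3 * J2_series 1 z + J2_series 0 z = 0"
proof -
  define f where "f k = real k * diffs J2_coeff k * z ^ k" for k
  have "(\<lambda>n. z * ((diffs ^^ 2) J2_coeff n * z ^ n)) sums (z * J2_series 2 z)"
    unfolding J2_series_def by (intro sums_mult summable_sums summable_J2_series)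
  moreover have "z * ((diffs ^^ 2) J2_coeff n * z ^ n) = f (Suc n)" for n
    by (simp add: f_def diffs_def numeral_2_eq_2 algebra_simps)
  ultimately have "f sums (z * J2_series 2 z)"
    using sums_Suc_iff[of f] by (simp add: f_def)
  moreover have "(\<lambda>k. 3 * (diffs J2_coeff k * z ^ k)) sums (3 * J2_series 1 z)"
    unfolding J2_series_def using summable_sums[OF summable_J2_series[of 1]] by (intro sums_mult) simp
  moreover have "(\<lambda>k. J2_coeff k * z ^ k) sums J2_series 0 z"
    unfolding J2_series_def using summable_sums[OF summable_J2_series[of 0]] by simp
  ultimately have "(\<lambda>k. f k + 3 * (diffs J2_coeff k * z ^ k) + J2_coeff k * z ^ k)
      sums (z * J2_series 2 z + 3 * J2_series 1 z + J2_series 0 z)"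
    by (intro sums_add)
  moreover have "f k + 3 * (diffs J2_coeff k * z ^ k) + J2_coeff k * z ^ k = 0" for k
  proof -
    have "(real k + 1) * (real k + 3) * J2_coeff (Suc k) * z ^ k = - J2_coeff k * z ^ k"
      by (simp only: J2_coeff_Suc)
    then show ?thesis by (simp add: f_def diffs_def algebra_simps)
  qed
  ultimately show ?thesis
    using sums_unique2[OF _ sums_zero] by simp
qed

lemma besselJ2_eq_J2_series: "besselJ2 x = x\<^sup>2 / 4 * J2_series 0 (x\<^sup>2 / 4)"
proof -
  have "(\<lambda>m. x\<^sup>2 / 4 * (J2_coeff m * (x\<^sup>2 / 4) ^ m)) sums (x\<^sup>2 / 4 * J2_series 0 (x\<^sup>2 / 4))"
    unfolding J2_series_def using summable_sums[OF summable_J2_series[of 0]] by (intro sums_mult) simp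
  moreover have "(x / 2) ^ (2 * m + 2) = x\<^sup>2 / 4 * (x\<^sup>2 / 4) ^ m" for m
    by (simp add: power_mult power_divide power2_eq_square)
  ultimately show ?thesis
    unfolding besselJ2_def J2_coeff_def[symmetric] by (simp add: sums_iff mult_ac)
qed

definition besselJ2' :: "real \<Rightarrow> real" where
  "besselJ2' x = x / 2 * (J2_series 0 (x\<^sup>2 / 4) + x\<^sup>2 / 4 * J2_series 1 (x\<^sup>2 / 4))"

definition besselJ2'' :: "real \<Rightarrow> real" where
  "besselJ2'' x = (J2_series 0 (x\<^sup>2 / 4) + x\<^sup>2 / 4 * J2_series 1 (x\<^sup>2 / 4)) / 2
     + x\<^sup>2 / 4 * (2 * J2_series 1 (x\<^sup>2 / 4) + x\<^sup>2 / 4 * J2_series 2 (x\<^sup>2 / 4))"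

lemma has_real_derivative_J2_series_square:
  "((\<lambda>x. J2_series k (x\<^sup>2 / 4)) has_real_derivative J2_series (Suc k) (x\<^sup>2 / 4) * (x / 2)) (at x)"
  by (rule DERIV_chain2[OF has_real_derivative_J2_series]) (auto intro!: derivative_eq_intros)

lemma has_real_derivative_besselJ2: "(besselJ2 has_real_derivative besselJ2' x) (at x)"
proof -
  have "((\<lambda>x. x\<^sup>2 / 4 * J2_series 0 (x\<^sup>2 / 4)) has_real_derivative besselJ2' x) (at x)"
    unfolding besselJ2'_def
    by (rule DERIV_cong[OF DERIV_mult[OF _ has_real_derivative_J2_series_square]])
      (auto intro!: derivative_eq_intros simp: algebra_simps)
  then show ?thesis by (simp add: besselJ2_eq_J2_series[abs_def])
qed

lemma has_real_derivative_besselJ2': "(besselJ2' has_real_derivative besselJ2'' x) (at x)"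
proof -
  have half: "((\<lambda>x::real. x / 2) has_real_derivative 1 / 2) (at x)"
    and quarter: "((\<lambda>x::real. x\<^sup>2 / 4) has_real_derivative x / 2) (at x)"
    by (auto intro!: derivative_eq_intros)
  show ?thesis
    unfolding besselJ2'_def[abs_def] besselJ2''_def
    by (rule DERIV_cong[OF DERIV_mult[OF half DERIV_add[OF has_real_derivative_J2_series_square
          DERIV_mult[OF quarter has_real_derivative_J2_series_square]]]])
      (simp add: field_simps power2_eq_square numeral_2_eq_2)
qed

lemma besselJ2_ode: "x\<^sup>2 * besselJ2'' x + x * besselJ2' x + (x\<^sup>2 - 4) * besselJ2 x = 0"
proof -
  define z where "z = x\<^sup>2 / 4"
  have "x\<^sup>2 = 4 * z" unfolding z_def by simp
  with J2_series_ode[of z] show ?thesis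
    unfolding besselJ2'_def besselJ2''_def besselJ2_eq_J2_series z_def[symmetric] by algebra
qed

text \<open>For \<open>u = \<surd>x J\<^sub>2\<close> Bessel's equation reads \<open>u'' + (1 - 15/(4x\<^sup>2)) u = 0\<close>; the energy
  \<open>u\<^sup>2 + u'\<^sup>2/(1 - 15/(4x\<^sup>2))\<close> below is therefore nonincreasing once \<open>x\<^sup>2 > 15/4\<close>.\<close>
definition besselJ2_energy :: "real \<Rightarrow> real" where
  "besselJ2_energy x = x * (besselJ2 x)\<^sup>2
     + x / (4 * (x\<^sup>2 - 15 / 4)) * (2 * x * besselJ2' x + besselJ2 x)\<^sup>2"

lemma besselJ2_energy_derivative_simplifies:
  fixes x :: real
  defines "W \<equiv> 2 * x * besselJ2' x + besselJ2 x" and "D \<equiv> x\<^sup>2 - 15 / 4"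
  assumes "D \<noteq> 0"
  shows "besselJ2 x * W + (- (4 * x\<^sup>2 + 15) / (16 * D\<^sup>2) * W\<^sup>2
      + x / (4 * D) * (2 * W * (3 * besselJ2' x + 2 * x * besselJ2'' x))) = - 15 / 8 * W\<^sup>2 / D\<^sup>2"
proof -
  have ode: "x * (3 * besselJ2' x + 2 * x * besselJ2'' x) = W / 2 - 2 * D * besselJ2 x"
    using besselJ2_ode[of x] unfolding W_def D_def by algebra
  have "x / (4 * D) * (2 * W * (3 * besselJ2' x + 2 * x * besselJ2'' x))
      = 2 * W * (W / 2 - 2 * D * besselJ2 x) / (4 * D)"
    unfolding ode[symmetric] by (simp add: ac_simps)
  also have "\<dots> = W\<^sup>2 / (4 * D) - besselJ2 x * W"
    using \<open>D \<noteq> 0\<close> by (simp add: field_simps power2_eq_square)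
  finally have cross: "x / (4 * D) * (2 * W * (3 * besselJ2' x + 2 * x * besselJ2'' x))
      = W\<^sup>2 / (4 * D) - besselJ2 x * W" .
  have "4 * x\<^sup>2 + 15 = 4 * D + 30" by (simp add: D_def)
  then show ?thesis
    unfolding cross using \<open>D \<noteq> 0\<close> by (simp add: field_simps power2_eq_square)
qed

lemma has_real_derivative_besselJ2_energy:
  assumes "x\<^sup>2 > 15 / 4"
  shows "(besselJ2_energy has_real_derivative
           - 15 / 8 * (2 * x * besselJ2' x + besselJ2 x)\<^sup>2 / (x\<^sup>2 - 15 / 4)\<^sup>2) (at x)"
proof -
  define D where "D = x\<^sup>2 - 15 / 4"
  define W where "W = 2 * x * besselJ2' x + besselJ2 x"
  have "D \<noteq> 0" using assms by (simp add: D_def)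
  note J = has_real_derivative_besselJ2 and J' = has_real_derivative_besselJ2'
  have "((\<lambda>x. x * (besselJ2 x)\<^sup>2) has_real_derivative besselJ2 x * W) (at x)"
    unfolding W_def by (rule DERIV_cong, (rule derivative_eq_intros J refl)+)
      (simp add: algebra_simps power2_eq_square)
  moreover have "((\<lambda>x. x / (4 * (x\<^sup>2 - 15 / 4))) has_real_derivative
      - (4 * x\<^sup>2 + 15) / (16 * D\<^sup>2)) (at x)"
    using \<open>D \<noteq> 0\<close> unfolding D_def by (auto intro!: derivative_eq_intros simp: field_simps power2_eq_square)
  moreover have "((\<lambda>x. (2 * x * besselJ2' x + besselJ2 x)\<^sup>2) has_real_derivative
      2 * W * (3 * besselJ2' x + 2 * x * besselJ2'' x)) (at x)"
    unfolding W_def by (rule DERIV_cong, (rule derivative_eq_intros J J' refl)+) (simp add: algebra_simps)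
  ultimately have "(besselJ2_energy has_real_derivative besselJ2 x * W + (- (4 * x\<^sup>2 + 15) / (16 * D\<^sup>2) * W\<^sup>2
      + x / (4 * D) * (2 * W * (3 * besselJ2' x + 2 * x * besselJ2'' x)))) (at x)"
    unfolding besselJ2_energy_def[abs_def]
    by (rule DERIV_cong[OF DERIV_add[OF _ DERIV_mult]]) (simp_all add: W_def D_def)
  then show ?thesis
    using besselJ2_energy_derivative_simplifies \<open>D \<noteq> 0\<close> unfolding W_def D_def by simp
qed

lemma besselJ2_energy_le:
  assumes "3 \<le> x"
  shows "besselJ2_energy x \<le> besselJ2_energy 3"
proof (rule DERIV_nonpos_imp_nonincreasing[OF assms])
  fix t :: real
  assume "3 \<le> t"
  then have "3\<^sup>2 \<le> t\<^sup>2" by (intro power_mono) auto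
  then show "\<exists>y. (besselJ2_energy has_real_derivative y) (at t) \<and> y \<le> 0"
    by (intro exI[of _ "- 15 / 8 * (2 * t * besselJ2' t + besselJ2 t)\<^sup>2 / (t\<^sup>2 - 15 / 4)\<^sup>2"]
        conjI has_real_derivative_besselJ2_energy) simp_all
qed

lemma besselJ2_square_le:
  assumes "3 \<le> x"
  shows "(besselJ2 x)\<^sup>2 \<le> besselJ2_energy 3 / x"
proof -
  have "3\<^sup>2 \<le> x\<^sup>2" using assms by (intro power_mono) auto
  then have "x * (besselJ2 x)\<^sup>2 \<le> besselJ2_energy x"
    unfolding besselJ2_energy_def using assms by (intro add_increasing2) auto
  with besselJ2_energy_le[OF assms] assms show ?thesis by (simp add: field_simps)
qed

lemma besselJ2_div_bounded_near_0: "\<exists>B. \<forall>x\<in>{0<..3}. \<bar>besselJ2 x\<bar> / x \<le> B"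
proof -
  have "continuous_on {0..3} (\<lambda>x. x / 4 * J2_series 0 (x\<^sup>2 / 4))"
    by (intro continuous_at_imp_continuous_on ballI continuous_intros
        DERIV_isCont[OF has_real_derivative_J2_series_square]) simp
  then have "bounded ((\<lambda>x. x / 4 * J2_series 0 (x\<^sup>2 / 4)) ` {0..3})"
    by (rule compact_imp_bounded[OF compact_continuous_image[OF _ compact_Icc]])
  then obtain B where B: "\<And>x. x \<in> {0..3} \<Longrightarrow> \<bar>x / 4 * J2_series 0 (x\<^sup>2 / 4)\<bar> \<le> B"
    unfolding bounded_iff by fastforce
  have "\<bar>besselJ2 x\<bar> / x \<le> B" if "x \<in> {0<..3}" for x
  proof -
    have "\<bar>besselJ2 x\<bar> / x = \<bar>x / 4 * J2_series 0 (x\<^sup>2 / 4)\<bar>"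
      using that by (simp add: besselJ2_eq_J2_series power2_eq_square abs_mult)
    also have "\<dots> \<le> B" using that by (intro B) auto
    finally show ?thesis .
  qed
  then show ?thesis by blast
qed

lemma besselJ2_energy_nonneg: "besselJ2_energy 3 \<ge> 0"
proof -
  have "0 \<le> (besselJ2 3)\<^sup>2" by simp
  also have "\<dots> \<le> besselJ2_energy 3 / 3" by (rule besselJ2_square_le) simp
  finally show ?thesis by simp
qed

lemma besselJ2_div_le_large:
  assumes "3 \<le> x"
  shows "\<bar>besselJ2 x\<bar> / x \<le> 3 * sqrt (besselJ2_energy 3) / ((1 + x) * sqrt (1 + x))"
proof -
  have "\<bar>besselJ2 x\<bar> \<le> sqrt (besselJ2_energy 3 / x)"
    using besselJ2_square_le[OF assms] by (intro real_le_rsqrt) simp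
  then have "\<bar>besselJ2 x\<bar> / x \<le> sqrt (besselJ2_energy 3 / x) / x"
    using assms by (intro divide_right_mono) auto
  also have "\<dots> = 3 * sqrt (besselJ2_energy 3) / (3 * (x * sqrt x))"
    by (simp add: real_sqrt_divide)
  also have "\<dots> \<le> 3 * sqrt (besselJ2_energy 3) / ((1 + x) * sqrt (1 + x))"
  proof -
    have "sqrt (1 + x) \<le> sqrt (9 / 4 * x)" using assms by (intro real_sqrt_le_mono) simp
    also have "\<dots> = 3 / 2 * sqrt x" by (simp add: real_sqrt_mult real_sqrt_divide)
    finally have "(1 + x) * sqrt (1 + x) \<le> (2 * x) * (3 / 2 * sqrt x)"
      using assms by (intro mult_mono) auto
    then show ?thesis
      using assms besselJ2_energy_nonneg by (intro frac_le) auto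
  qed
  finally show ?thesis .
qed

lemma besselJ2_div_decay: "\<exists>M\<ge>0. \<forall>x>0. \<bar>besselJ2 x\<bar> / x \<le> M / ((1 + x) * sqrt (1 + x))"
proof -
  obtain B where B: "\<And>x. x \<in> {0<..3} \<Longrightarrow> \<bar>besselJ2 x\<bar> / x \<le> B"
    using besselJ2_div_bounded_near_0 by blast
  have "B \<ge> 0" using B[of 1] abs_ge_zero[of "besselJ2 1"] by simp
  define C where "C = 3 * sqrt (besselJ2_energy 3)"
  have "C \<ge> 0" using besselJ2_energy_nonneg by (simp add: C_def)
  have "\<bar>besselJ2 x\<bar> / x \<le> (8 * B + C) / ((1 + x) * sqrt (1 + x))" if "x > 0" for x
  proof (cases "x \<le> 3")
    case True
    have "sqrt (1 + x) \<le> sqrt 4" using True by (intro real_sqrt_le_mono) simp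
    then have "(1 + x) * sqrt (1 + x) \<le> 4 * 2" using True \<open>x > 0\<close> by (intro mult_mono) auto
    then have "B * ((1 + x) * sqrt (1 + x)) \<le> 8 * B"
      using \<open>B \<ge> 0\<close> by (simp add: mult_left_mono mult.commute)
    then have "B \<le> 8 * B / ((1 + x) * sqrt (1 + x))"
      using \<open>x > 0\<close> by (simp add: pos_le_divide_eq)
    also have "\<dots> \<le> (8 * B + C) / ((1 + x) * sqrt (1 + x))"
      using \<open>C \<ge> 0\<close> \<open>x > 0\<close> by (intro divide_right_mono) auto
    finally show ?thesis using B[of x] True that by simp
  next
    case False
    then have "\<bar>besselJ2 x\<bar> / x \<le> C / ((1 + x) * sqrt (1 + x))"
      unfolding C_def by (intro besselJ2_div_le_large) simp
    also have "\<dots> \<le> (8 * B + C) / ((1 + x) * sqrt (1 + x))"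
      using \<open>B \<ge> 0\<close> that by (intro divide_right_mono) auto
    finally show ?thesis .
  qed
  with \<open>B \<ge> 0\<close> \<open>C \<ge> 0\<close> show ?thesis by (intro exI[of _ "8 * B + C"]) auto
qed

lemma integrable_inverse_three_halves:
  fixes ell M :: real
  assumes "ell > 0" and "M \<ge> 0"
  shows "(\<lambda>z. M / ell / ((1 + z / ell) * sqrt (1 + z / ell))) integrable_on {0<..}"
proof -
  define F where "F z = - 2 * M / sqrt (1 + z / ell)" for z
  have "set_integrable lborel (einterval 0 \<infinity>) (\<lambda>z. M / ell / ((1 + z / ell) * sqrt (1 + z / ell)))"
  proof (rule interval_integral_FTC_nonneg(1)[where F=F and A="- 2 * M" and B=0])
    fix x :: real
    assume "0 < ereal x"
    then have "x > 0" "1 + x / ell > 0" using \<open>ell > 0\<close> by (simp_all add: add_pos_pos)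
    then show "(F has_real_derivative M / ell / ((1 + x / ell) * sqrt (1 + x / ell))) (at x)"
      unfolding F_def using \<open>ell > 0\<close>
      by (auto intro!: derivative_eq_intros simp: field_simps)
    show "isCont (\<lambda>z. M / ell / ((1 + z / ell) * sqrt (1 + z / ell))) x"
      using \<open>1 + x / ell > 0\<close> \<open>ell > 0\<close> by (intro continuous_intros) auto
  next
    show "AE x in lborel. 0 < ereal x \<longrightarrow> ereal x < \<infinity> \<longrightarrow> 0 \<le> M / ell / ((1 + x / ell) * sqrt (1 + x / ell))"
      using assms by (auto intro!: divide_nonneg_pos simp: add_pos_pos)
  next
    have "(F \<longlongrightarrow> F 0) (at_right 0)"
      unfolding F_def using \<open>ell > 0\<close> by (intro tendsto_intros) auto
    then show "((F \<circ> real_of_ereal) \<longlongrightarrow> - 2 * M) (at_right 0)"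
      unfolding zero_ereal_def ereal_tendsto_simps by (simp add: F_def)
  next
    have "(F \<longlongrightarrow> 0) at_top" unfolding F_def using \<open>ell > 0\<close> by real_asymp
    then show "((F \<circ> real_of_ereal) \<longlongrightarrow> 0) (at_left \<infinity>)"
      unfolding ereal_tendsto_simps .
  qed simp
  moreover have "einterval 0 \<infinity> = {0<..}" by (simp add: zero_ereal_def)
  ultimately show ?thesis using set_borel_integral_eq_integral(1) by metis
qed

lemma absolutely_integrable_besselJ2_dominated:
  fixes g :: "real \<Rightarrow> real"
  assumes "ell > 0" and "continuous_on {0<..} g"
    and dominated: "\<And>z. z > 0 \<Longrightarrow> \<bar>g z\<bar> \<le> \<bar>besselJ2 (z / ell)\<bar> / z"
  shows "g absolutely_integrable_on {0<..}"
proof -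
  obtain M where "M \<ge> 0" and M: "\<And>x. x > 0 \<Longrightarrow> \<bar>besselJ2 x\<bar> / x \<le> M / ((1 + x) * sqrt (1 + x))"
    using besselJ2_div_decay by blast
  have "{0<..} \<in> sets (lebesgue :: real measure)"
    by (rule sets_completionI_sets) (simp add: borel_open[OF open_greaterThan])
  then show ?thesis
  proof (rule measurable_bounded_by_integrable_imp_absolutely_integrable[rotated])
    show "g \<in> borel_measurable (lebesgue_on {0<..})"
      using \<open>{0<..} \<in> sets lebesgue\<close> by (rule continuous_imp_measurable_on_sets_lebesgue[OF assms(2)])
    show "(\<lambda>z. M / ell / ((1 + z / ell) * sqrt (1 + z / ell))) integrable_on {0<..}"
      using \<open>ell > 0\<close> \<open>M \<ge> 0\<close> by (rule integrable_inverse_three_halves)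
    fix z :: real
    assume "z \<in> {0<..}"
    then have "norm (g z) \<le> \<bar>besselJ2 (z / ell)\<bar> / (z / ell) / ell"
      using dominated[of z] \<open>ell > 0\<close> by simp
    also have "\<dots> \<le> M / ((1 + z / ell) * sqrt (1 + z / ell)) / ell"
      using M[of "z / ell"] \<open>z \<in> {0<..}\<close> \<open>ell > 0\<close> by (intro divide_right_mono) auto
    finally show "norm (g z) \<le> M / ell / ((1 + z / ell) * sqrt (1 + z / ell))" by (simp add: mult.commute)
  qed
qed

section \<open>Minkowski vectors\<close>

lemma mink_self: "mink v v = (norm (snd v))\<^sup>2 - (fst v)\<^sup>2"
  unfolding mink_def power2_norm_eq_inner by (simp add: power2_eq_square)

lemma mink_scaleR: "mink (k *\<^sub>R v) (k *\<^sub>R v) = k\<^sup>2 * mink v v"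
  unfolding mink_def by (simp add: power2_eq_square algebra_simps)

lemma tanh_rap_dir:
  assumes "fst v > 0" and "mink v v = -1"
  shows "tanh (fst (rap_dir v)) *\<^sub>R snd (rap_dir v) = (1 / fst v) *\<^sub>R snd v"
proof -
  have sq: "(fst v)\<^sup>2 = 1 + (norm (snd v))\<^sup>2" using assms(2) unfolding mink_self by simp
  then have "1\<^sup>2 \<le> (fst v)\<^sup>2" by simp
  then have "1 \<le> fst v" using assms(1) by (rule power2_le_imp_le[OF _ less_imp_le])
  define n :: "real^3" where "n = (if snd v = 0 then axis 1 1 else snd v /\<^sub>R norm (snd v))"
  have "sinh (arcosh (fst v)) = norm (snd v)"
    using \<open>1 \<le> fst v\<close> sq by (simp add: sinh_arcosh_real)
  then have "snd v = sinh (arcosh (fst v)) *\<^sub>R n" unfolding n_def by auto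
  then have "\<exists>p. case p of (c, n) \<Rightarrow> c \<ge> 0 \<and> norm n = 1 \<and> fst v = cosh c \<and> snd v = sinh c *\<^sub>R n"
    using \<open>1 \<le> fst v\<close> by (intro exI[of _ "(arcosh (fst v), n)"]) (simp add: n_def)
  then have "case rap_dir v of (c, n) \<Rightarrow> c \<ge> 0 \<and> norm n = 1 \<and> fst v = cosh c \<and> snd v = sinh c *\<^sub>R n"
    unfolding rap_dir_def by (rule someI_ex)
  moreover have "cosh c > 0" for c :: real by (rule cosh_real_pos)
  ultimately show ?thesis
    by (cases "rap_dir v") (simp add: tanh_def divide_inverse)
qed

lemma one_minus_mult_pos:
  fixes u v :: real
  assumes "\<bar>u\<bar> < 1" and "\<bar>v\<bar> < 1"
  shows "1 - u * v > 0"
proof -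
  have "\<bar>u\<bar> * \<bar>v\<bar> \<le> \<bar>u\<bar>" using assms(2) by (intro mult_left_le) auto
  with assms(1) abs_ge_self[of "u * v"] show ?thesis by (simp add: abs_mult)
qed

lemma abs_relative_velocity_component_le:
  fixes u v c :: real
  assumes "\<bar>u\<bar> < 1" and "\<bar>v\<bar> < 1" and "\<bar>c\<bar> \<le> 1"
  shows "\<bar>(u - v) * c / (1 - u * v)\<bar> \<le> 1"
proof -
  have "0 \<le> (1 - u) * (1 + v)" and "0 \<le> (1 + u) * (1 - v)"
    using assms by (auto intro!: mult_nonneg_nonneg)
  then have "\<bar>u - v\<bar> \<le> 1 - u * v" by (simp add: algebra_simps abs_le_iff)
  moreover have "\<bar>(u - v) * c\<bar> \<le> \<bar>u - v\<bar>" using assms(3) by (simp add: abs_mult mult_left_le)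
  ultimately show ?thesis
    using one_minus_mult_pos[OF assms(1,2)] by (simp add: abs_div)
qed

lemma mink_preserving_left_inverse:
  assumes "\<And>u v. mink (L u) (L v) = mink u v"
  obtains g where "continuous_on UNIV g" and "\<And>x. g (L x) = x"
proof
  define g where "g y = (- mink y (L e0), \<chi> i. mink y (L (0, axis i 1)))" for y
  show "continuous_on UNIV g" unfolding g_def mink_def by (intro continuous_intros)
  show "g (L x) = x" for x
    unfolding g_def assms by (simp add: mink_def e0_def inner_axis)
qed

definition spatially_along :: "real^3 \<Rightarrow> event \<Rightarrow> bool" where
  "spatially_along n z \<longleftrightarrow> snd z = (snd z \<bullet> n) *\<^sub>R n"

lemma subspace_spatially_along: "subspace {z. spatially_along n z}"
proof -
  have "linear (\<lambda>z::event. snd z - (snd z \<bullet> n) *\<^sub>R n)"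
    by (intro linearI) (simp_all add: algebra_simps)
  from linear_subspace_kernel[OF this] show ?thesis
    unfolding spatially_along_def by simp
qed

lemma spatially_along_norm:
  assumes "spatially_along n z" and "norm n = 1"
  shows "(norm (snd z))\<^sup>2 = (snd z \<bullet> n)\<^sup>2"
proof -
  have "norm (snd z) = \<bar>snd z \<bullet> n\<bar>"
    using assms unfolding spatially_along_def by (metis norm_scaleR mult.right_neutral)
  then show ?thesis by simp
qed

lemma exists_spatial_direction:
  assumes "e0 = \<alpha> *\<^sub>R U + \<beta> *\<^sub>R W"
  shows "\<exists>n. norm n = 1 \<and> (\<forall>s r. spatially_along n (s *\<^sub>R U + r *\<^sub>R W))"
proof -
  have snd0: "\<alpha> *\<^sub>R snd U + \<beta> *\<^sub>R snd W = 0" and fst1: "\<alpha> * fst U + \<beta> * fst W = 1"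
    using arg_cong[OF assms, of snd] arg_cong[OF assms, of fst] by (simp_all add: e0_def)
  obtain m where m: "\<And>s r. \<exists>k. s *\<^sub>R snd U + r *\<^sub>R snd W = k *\<^sub>R m"
  proof (cases "\<alpha> = 0")
    case True
    then have "snd W = 0" using snd0 fst1 by auto
    then show ?thesis by (intro that[of "snd U"]) auto
  next
    case False
    have "snd U = (1 / \<alpha>) *\<^sub>R (\<alpha> *\<^sub>R snd U)" using False by simp
    also have "\<alpha> *\<^sub>R snd U = - (\<beta> *\<^sub>R snd W)" using snd0 by (simp add: eq_neg_iff_add_eq_0)
    finally have "snd U = (- \<beta> / \<alpha>) *\<^sub>R snd W" by simp
    then have "s *\<^sub>R snd U + r *\<^sub>R snd W = (s * (- \<beta> / \<alpha>) + r) *\<^sub>R snd W" for s r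
      by (simp add: algebra_simps)
    then show ?thesis by (intro that[of "snd W"]) blast
  qed
  define n where "n = (if m = 0 then axis 1 1 else m /\<^sub>R norm m)"
  have "norm n = 1" by (simp add: n_def)
  moreover have along: "k *\<^sub>R m = ((k *\<^sub>R m) \<bullet> n) *\<^sub>R n" for k
  proof (cases "m = 0")
    case False
    have "m \<bullet> m = norm m * norm m" by (metis dot_square_norm power2_eq_square)
    with False show ?thesis by (simp add: n_def)
  qed (simp add: n_def)
  have "spatially_along n (s *\<^sub>R U + r *\<^sub>R W)" for s r
  proof -
    obtain k where "s *\<^sub>R snd U + r *\<^sub>R snd W = k *\<^sub>R m" using m by blast
    then show ?thesis unfolding spatially_along_def using along[of k] \<open>norm n = 1\<close> by (simp add: norm_eq_1)
  qed
  with \<open>norm n = 1\<close> show ?thesis by blast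
qed

section \<open>Worldlines in a plane\<close>

lemma has_vector_derivative_in_subspace:
  fixes f :: "real \<Rightarrow> 'a::euclidean_space"
  assumes "(f has_vector_derivative v) (at x)" and "subspace S"
    and "open U" "x \<in> U" and "\<And>y. y \<in> U \<Longrightarrow> f y - f x \<in> S"
  shows "v \<in> S"
proof (rule Lim_in_closed_set[OF closed_subspace[OF \<open>subspace S\<close>]])
  have "((\<lambda>y. ((f y - f x) - (y - x) *\<^sub>R v) /\<^sub>R norm (y - x)) \<longlongrightarrow> 0) (at x)"
    using assms(1) by (simp add: has_vector_derivative_def has_derivative_at_within)
  moreover have "norm (((f y - f x) - (y - x) *\<^sub>R v) /\<^sub>R norm (y - x))
      = norm ((f y - f x) /\<^sub>R (y - x) - v)" if "y \<noteq> x" for y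
  proof -
    have "(f y - f x) /\<^sub>R (y - x) - v = ((f y - f x) - (y - x) *\<^sub>R v) /\<^sub>R (y - x)"
      using that by (simp add: scaleR_diff_right)
    then show ?thesis by simp
  qed
  then have "eventually (\<lambda>y. norm (((f y - f x) - (y - x) *\<^sub>R v) /\<^sub>R norm (y - x))
      = norm ((f y - f x) /\<^sub>R (y - x) - v)) (at x)"
    by (auto simp: eventually_at_filter)
  ultimately have "((\<lambda>y. norm ((f y - f x) /\<^sub>R (y - x) - v)) \<longlongrightarrow> 0) (at x)"
    by (rule Lim_transform_eventually[OF tendsto_norm_zero])
  then have "((\<lambda>y. (f y - f x) /\<^sub>R (y - x) - v) \<longlongrightarrow> 0) (at x)"
    by (simp add: tendsto_norm_zero_iff)
  then show "((\<lambda>y. (f y - f x) /\<^sub>R (y - x)) \<longlongrightarrow> v) (at x)"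
    by (simp add: LIM_zero_iff)
  show "eventually (\<lambda>y. (f y - f x) /\<^sub>R (y - x) \<in> S) (at x)"
    using eventually_at_in_open'[OF assms(3,4)] by eventually_elim (use assms in \<open>auto intro: subspace_scale\<close>)
qed simp

lemma antimono_bounded_has_limit_at_right:
  fixes f :: "real \<Rightarrow> real"
  assumes "a < b" and antimono: "\<And>s t. a < s \<Longrightarrow> s \<le> t \<Longrightarrow> t \<le> b \<Longrightarrow> f t \<le> f s"
    and bounded: "\<And>t. a < t \<Longrightarrow> t \<le> b \<Longrightarrow> f t \<le> B"
  shows "\<exists>l. (f \<longlongrightarrow> l) (at_right a)"
proof -
  have bdd: "bdd_above (f ` {a<..b})" using bounded by (intro bdd_aboveI[of _ B]) auto
  have "(f \<longlongrightarrow> Sup (f ` {a<..b})) (at_right a)"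
  proof (rule increasing_tendsto)
    show "eventually (\<lambda>t. f t \<le> Sup (f ` {a<..b})) (at_right a)"
      unfolding eventually_at_right_field using \<open>a < b\<close> bdd
      by (intro exI[of _ b]) (auto intro!: cSUP_upper)
  next
    fix x
    assume "x < Sup (f ` {a<..b})"
    then obtain s where "s \<in> {a<..b}" "x < f s"
      using less_cSUP_iff[OF _ bdd] \<open>a < b\<close> by auto
    then show "eventually (\<lambda>t. x < f t) (at_right a)"
      unfolding eventually_at_right_field
      by (intro exI[of _ s]) (auto intro: less_le_trans[OF _ antimono])
  qed
  then show ?thesis by blast
qed

text \<open>Only the affine span of the plane enters; being timelike is automatic for a plane containing
  a worldline.\<close>
locale planar_worldline =
  fixes a b :: ereal and \<xi> :: "real \<Rightarrow> event" and p u w :: event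
    and \<tau>0 :: real and L :: "event \<Rightarrow> event" and c :: event
  assumes worldline: "worldline a b \<xi>"
    and in_plane: "\<And>t. t \<in> dom_I a b \<Longrightarrow> \<exists>s r. \<xi> t = p + s *\<^sub>R u + r *\<^sub>R w"
    and \<tau>0: "\<tau>0 \<in> dom_I a b"
    and L_linear: "linear L" and L_mink: "\<And>x y. mink (L x) (L y) = mink x y"
    and rest_frame: "((\<lambda>t. L (\<xi> t) + c) has_vector_derivative e0) (at \<tau>0)"
begin

abbreviation "I \<equiv> dom_I a b"

definition \<eta> :: "real \<Rightarrow> event" where "\<eta> t = L (\<xi> t) + c"

lemma open_I: "open I"
  using open_einterval[of a b] unfolding einterval_def dom_I_def .

lemma I_between: "s \<in> I \<Longrightarrow> t \<in> I \<Longrightarrow> s \<le> x \<Longrightarrow> x \<le> t \<Longrightarrow> x \<in> I"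
  unfolding dom_I_def by (metis ereal_less_eq(3) le_less_trans less_le_trans mem_Collect_eq)

lemma I_before_\<tau>0: "a < ereal t \<Longrightarrow> t < \<tau>0 \<Longrightarrow> t \<in> I"
  using \<tau>0 unfolding dom_I_def by (auto intro: less_trans[of "ereal t" "ereal \<tau>0" b])

lemma bounded_linear_L: "bounded_linear L"
  using L_linear linear_conv_bounded_linear by blast

definition \<xi>_deriv :: "nat \<Rightarrow> real \<Rightarrow> event" where
  "\<xi>_deriv = (SOME D. (\<forall>t\<in>I. D 0 t = \<xi> t) \<and>
     (\<forall>k. \<forall>t\<in>I. (D k has_vector_derivative D (Suc k) t) (at t)))"

lemma \<xi>_deriv_0: "t \<in> I \<Longrightarrow> \<xi>_deriv 0 t = \<xi> t"
  and has_vector_derivative_\<xi>_deriv: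
    "t \<in> I \<Longrightarrow> (\<xi>_deriv k has_vector_derivative \<xi>_deriv (Suc k) t) (at t)"
  using someI_ex[OF worldline[unfolded worldline_def smooth_curve_def, THEN conjunct2, THEN conjunct1]]
  unfolding \<xi>_deriv_def[symmetric] by auto

definition vel :: "real \<Rightarrow> event" where "vel t = L (\<xi>_deriv 1 t)"

lemma has_vector_derivative_\<xi>: "t \<in> I \<Longrightarrow> (\<xi> has_vector_derivative \<xi>_deriv 1 t) (at t)"
  using has_vector_derivative_transform_within_open[OF has_vector_derivative_\<xi>_deriv open_I] \<xi>_deriv_0
  by simp

lemma has_vector_derivative_\<eta>: "t \<in> I \<Longrightarrow> (\<eta> has_vector_derivative vel t) (at t)"
  unfolding \<eta>_def[abs_def] vel_def
  by (auto intro!: derivative_eq_intros bounded_linear.has_vector_derivative[OF bounded_linear_L]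
      has_vector_derivative_\<xi>)

lemma isCont_\<eta>: "t \<in> I \<Longrightarrow> isCont \<eta> t"
  using has_vector_derivative_\<eta> has_vector_derivative_continuous by blast

lemma isCont_vel: "t \<in> I \<Longrightarrow> isCont vel t"
  using continuous_at_compose[OF has_vector_derivative_continuous[OF has_vector_derivative_\<xi>_deriv]
      linear_continuous_at[OF bounded_linear_L]]
  unfolding vel_def[abs_def] o_def by blast

lemma mink_vel: "t \<in> I \<Longrightarrow> mink (vel t) (vel t) = -1"
  using worldline vector_derivative_at[OF has_vector_derivative_\<xi>]
  unfolding worldline_def vel_def L_mink by auto

lemma vel_\<tau>0: "vel \<tau>0 = e0"
  using vector_derivative_unique_at[OF has_vector_derivative_\<eta>[OF \<tau>0]] rest_frame
  unfolding \<eta>_def by simp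

text \<open>The tangent vector \<open>e0\<close> at \<open>\<tau>0\<close> lies in the direction space of the plane, so the spatial
  parts of that space are collinear.\<close>
lemma exists_direction: "\<exists>n. norm n = 1 \<and> (\<forall>t\<in>I. spatially_along n (\<eta> t - \<eta> \<tau>0))"
proof -
  define S where "S = range (\<lambda>(s, r). s *\<^sub>R L u + r *\<^sub>R L w)"
  have "subspace S"
    unfolding S_def by (intro linear_subspace_image subspace_UNIV linearI) (auto simp: algebra_simps)
  have in_S: "\<eta> t - \<eta> \<tau>0 \<in> S" if "t \<in> I" for t
  proof -
    obtain s1 r1 s2 r2 where "\<xi> t = p + s1 *\<^sub>R u + r1 *\<^sub>R w" "\<xi> \<tau>0 = p + s2 *\<^sub>R u + r2 *\<^sub>R w"
      using in_plane[OF \<open>t \<in> I\<close>] in_plane[OF \<tau>0] by blast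
    then have "\<eta> t - \<eta> \<tau>0 = (s1 - s2) *\<^sub>R L u + (r1 - r2) *\<^sub>R L w"
      unfolding \<eta>_def by (simp add: linear_diff[OF L_linear, symmetric] linear_add[OF L_linear]
          linear_scale[OF L_linear] algebra_simps)
    then show ?thesis unfolding S_def by (auto intro!: image_eqI[of _ _ "(s1 - s2, r1 - r2)"])
  qed
  have "e0 \<in> S"
    using has_vector_derivative_in_subspace[OF has_vector_derivative_\<eta>[OF \<tau>0] \<open>subspace S\<close> open_I \<tau>0]
    by (simp add: vel_\<tau>0 in_S)
  then obtain \<alpha> \<beta> where "e0 = \<alpha> *\<^sub>R L u + \<beta> *\<^sub>R L w" unfolding S_def by auto
  from exists_spatial_direction[OF this] obtain n
    where "norm n = 1" "\<And>s r. spatially_along n (s *\<^sub>R L u + r *\<^sub>R L w)" by blast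
  with in_S show ?thesis unfolding S_def by fastforce
qed

definition dir :: "real^3" where
  "dir = (SOME n. norm n = 1 \<and> (\<forall>t\<in>I. spatially_along n (\<eta> t - \<eta> \<tau>0)))"

lemma norm_dir: "norm dir = 1" and along_dir: "t \<in> I \<Longrightarrow> spatially_along dir (\<eta> t - \<eta> \<tau>0)"
  using someI_ex[OF exists_direction] unfolding dir_def[symmetric] by auto

lemma vel_along_dir: "t \<in> I \<Longrightarrow> spatially_along dir (vel t)"
proof (rule has_vector_derivative_in_subspace[OF has_vector_derivative_\<eta> subspace_spatially_along open_I,
      simplified])
  fix s t
  assume "s \<in> I" "t \<in> I"
  then have "(\<eta> s - \<eta> \<tau>0) - (\<eta> t - \<eta> \<tau>0) \<in> {z. spatially_along dir z}"
    using along_dir subspace_diff[OF subspace_spatially_along] by blast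
  then show "spatially_along dir (\<eta> s - \<eta> t)" by simp
qed

definition time_sep :: "real \<Rightarrow> real" where "time_sep t = fst (\<eta> t - \<eta> \<tau>0)"
definition space_sep :: "real \<Rightarrow> real" where "space_sep t = snd (\<eta> t - \<eta> \<tau>0) \<bullet> dir"
definition vel_t :: "real \<Rightarrow> real" where "vel_t t = fst (vel t)"
definition vel_x :: "real \<Rightarrow> real" where "vel_x t = snd (vel t) \<bullet> dir"

lemma \<eta>_diff_eq: "t \<in> I \<Longrightarrow> \<eta> t - \<eta> \<tau>0 = (time_sep t, space_sep t *\<^sub>R dir)"
  using along_dir unfolding spatially_along_def time_sep_def space_sep_def by (simp add: prod_eq_iff)

lemma vel_eq: "t \<in> I \<Longrightarrow> vel t = (vel_t t, vel_x t *\<^sub>R dir)"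
  using vel_along_dir unfolding spatially_along_def vel_t_def vel_x_def by (simp add: prod_eq_iff)

lemma has_real_derivative_time_sep: "t \<in> I \<Longrightarrow> (time_sep has_real_derivative vel_t t) (at t)"
  unfolding time_sep_def[abs_def] vel_t_def has_real_derivative_iff_has_vector_derivative
  by (auto intro!: derivative_eq_intros bounded_linear.has_vector_derivative[OF bounded_linear_fst]
      has_vector_derivative_\<eta>)

lemma has_real_derivative_space_sep:
  assumes "t \<in> I"
  shows "(space_sep has_real_derivative vel_x t) (at t)"
proof -
  have "bounded_linear (\<lambda>z::event. snd z \<bullet> dir)"
    by (rule bounded_linear_compose[OF bounded_linear_inner_left bounded_linear_snd])
  from bounded_linear.has_vector_derivative[OF this has_vector_derivative_\<eta>[OF assms]]
  have "((\<lambda>t. snd (\<eta> t) \<bullet> dir - snd (\<eta> \<tau>0) \<bullet> dir) has_vector_derivative snd (vel t) \<bullet> dir) (at t)"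
    by (auto intro!: derivative_eq_intros)
  then show ?thesis unfolding space_sep_def vel_x_def has_real_derivative_iff_has_vector_derivative
    by (simp add: inner_diff_left)
qed

lemma isCont_vel_t: "t \<in> I \<Longrightarrow> isCont vel_t t"
  unfolding vel_t_def[abs_def] by (intro continuous_intros isCont_vel)

lemma isCont_vel_x: "t \<in> I \<Longrightarrow> isCont vel_x t"
  unfolding vel_x_def[abs_def] by (intro continuous_intros isCont_vel)

lemma vel_t_square: "t \<in> I \<Longrightarrow> (vel_t t)\<^sup>2 = 1 + (vel_x t)\<^sup>2"
  using mink_vel[of t] spatially_along_norm[OF vel_along_dir norm_dir]
  unfolding mink_self vel_t_def vel_x_def by simp

lemma vel_t_pos: "t \<in> I \<Longrightarrow> vel_t t > 0"
proof (rule ccontr)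
  assume "t \<in> I" and "\<not> vel_t t > 0"
  have cont: "continuous_on {x..y} vel_t" if "x \<in> I" "y \<in> I" for x y
    using that by (intro continuous_at_imp_continuous_on ballI isCont_vel_t) (auto intro: I_between)
  have "vel_t \<tau>0 = 1" by (simp add: vel_t_def vel_\<tau>0 e0_def)
  then obtain x where "x \<in> I" "vel_t x = 0"
    using IVT'[of vel_t t 0 \<tau>0] IVT2'[of vel_t t 0 \<tau>0] cont[OF \<open>t \<in> I\<close> \<tau>0] cont[OF \<tau>0 \<open>t \<in> I\<close>]
      \<open>\<not> vel_t t > 0\<close> I_between[OF \<open>t \<in> I\<close> \<tau>0] I_between[OF \<tau>0 \<open>t \<in> I\<close>]
    by (cases "t \<le> \<tau>0") force+
  with vel_t_square[of x] show False by (simp add: power2_eq_square) (smt (verit) zero_le_square)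
qed

lemma abs_vel_x_less: "t \<in> I \<Longrightarrow> \<bar>vel_x t\<bar> < vel_t t"
  using vel_t_square[of t] vel_t_pos[of t] by (simp add: power2_less_imp_less)

text \<open>Null coordinates of \<open>\<eta> \<tau>0 - \<eta> t\<close>. Both decrease strictly along the timelike worldline,
  which is what makes \<open>varpi\<close> well defined.\<close>
definition null_p :: "real \<Rightarrow> real" where "null_p t = - (time_sep t + space_sep t)"
definition null_q :: "real \<Rightarrow> real" where "null_q t = - (time_sep t - space_sep t)"

lemma has_real_derivative_null_p: "t \<in> I \<Longrightarrow> (null_p has_real_derivative - (vel_t t + vel_x t)) (at t)"
  and has_real_derivative_null_q: "t \<in> I \<Longrightarrow> (null_q has_real_derivative - (vel_t t - vel_x t)) (at t)"
  unfolding null_p_def[abs_def] null_q_def[abs_def]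
  by (auto intro!: derivative_eq_intros has_real_derivative_time_sep has_real_derivative_space_sep)

lemma null_p_decreasing: "s \<in> I \<Longrightarrow> t \<in> I \<Longrightarrow> s < t \<Longrightarrow> null_p t < null_p s"
  and null_q_decreasing: "s \<in> I \<Longrightarrow> t \<in> I \<Longrightarrow> s < t \<Longrightarrow> null_q t < null_q s"
proof -
  assume "s \<in> I" "t \<in> I" "s < t"
  then have I: "x \<in> I" if "s \<le> x" "x \<le> t" for x using that I_between by blast
  show "null_p t < null_p s"
  proof (rule DERIV_neg_imp_decreasing[OF \<open>s < t\<close>])
    fix x assume "s \<le> x" "x \<le> t"
    with I abs_vel_x_less[of x] show "\<exists>y. DERIV null_p x :> y \<and> y < 0"
      by (intro exI[of _ "- (vel_t x + vel_x x)"] conjI has_real_derivative_null_p) auto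
  qed
  show "null_q t < null_q s"
  proof (rule DERIV_neg_imp_decreasing[OF \<open>s < t\<close>])
    fix x assume "s \<le> x" "x \<le> t"
    with I abs_vel_x_less[of x] show "\<exists>y. DERIV null_q x :> y \<and> y < 0"
      by (intro exI[of _ "- (vel_t x - vel_x x)"] conjI has_real_derivative_null_q) auto
  qed
qed

lemma \<eta>_eq_null_coords:
  "t \<in> I \<Longrightarrow> \<eta> t = \<eta> \<tau>0 + (- (null_p t + null_q t) / 2, ((null_q t - null_p t) / 2) *\<^sub>R dir)"
  using \<eta>_diff_eq[of t] by (simp add: null_p_def null_q_def algebra_simps)

lemma null_p_antimono: "s \<in> I \<Longrightarrow> t \<in> I \<Longrightarrow> s \<le> t \<Longrightarrow> null_p t \<le> null_p s"
  and null_q_antimono: "s \<in> I \<Longrightarrow> t \<in> I \<Longrightarrow> s \<le> t \<Longrightarrow> null_q t \<le> null_q s"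
  using null_p_decreasing[of s t] null_q_decreasing[of s t] by (cases "s = t"; simp)+

lemma null_p_pos: "t \<in> I \<Longrightarrow> t < \<tau>0 \<Longrightarrow> null_p t > 0"
  and null_q_pos: "t \<in> I \<Longrightarrow> t < \<tau>0 \<Longrightarrow> null_q t > 0"
  using null_p_decreasing[OF _ \<tau>0] null_q_decreasing[OF _ \<tau>0]
  by (simp_all add: null_p_def null_q_def time_sep_def space_sep_def)

definition D :: "real \<Rightarrow> real" where "D t = mdist (\<eta> \<tau>0 - \<eta> t)"

lemma D_eq: "t \<in> I \<Longrightarrow> D t = sqrt (null_p t * null_q t)"
proof -
  assume "t \<in> I"
  have "mink (\<eta> \<tau>0 - \<eta> t) (\<eta> \<tau>0 - \<eta> t) = mink (\<eta> t - \<eta> \<tau>0) (\<eta> t - \<eta> \<tau>0)"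
    unfolding mink_def by (simp add: algebra_simps inner_commute)
  then have "- mink (\<eta> \<tau>0 - \<eta> t) (\<eta> \<tau>0 - \<eta> t) = (time_sep t)\<^sup>2 - (space_sep t)\<^sup>2"
    unfolding mink_self \<eta>_diff_eq[OF \<open>t \<in> I\<close>] using norm_dir by simp
  also have "\<dots> = null_p t * null_q t"
    by (simp add: null_p_def null_q_def algebra_simps power2_eq_square)
  finally show ?thesis unfolding D_def mdist_def by simp
qed

lemma D_\<tau>0: "D \<tau>0 = 0"
  by (simp add: D_def mdist_def mink_def)

lemma D_pos: "t \<in> I \<Longrightarrow> t < \<tau>0 \<Longrightarrow> D t > 0"
  by (simp add: D_eq null_p_pos null_q_pos)

lemma D_decreasing:
  assumes "s \<in> I" "s < t" "t \<le> \<tau>0"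
  shows "D t < D s"
proof (cases "t = \<tau>0")
  case True
  with assms show ?thesis by (simp add: D_\<tau>0 D_pos)
next
  case False
  with assms have "t \<in> I" "t < \<tau>0" using I_between[OF _ \<tau>0] by auto
  have "null_p t * null_q t < null_p s * null_q s"
    using null_p_decreasing[OF \<open>s \<in> I\<close> \<open>t \<in> I\<close> \<open>s < t\<close>] null_q_decreasing[OF \<open>s \<in> I\<close> \<open>t \<in> I\<close> \<open>s < t\<close>]
      null_p_pos[OF \<open>t \<in> I\<close> \<open>t < \<tau>0\<close>] null_q_pos[OF \<open>t \<in> I\<close> \<open>t < \<tau>0\<close>]
    by (intro mult_strict_mono) auto
  then show ?thesis unfolding D_eq[OF \<open>s \<in> I\<close>] D_eq[OF \<open>t \<in> I\<close>] by simp
qed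

lemma isCont_D: "t \<in> I \<Longrightarrow> isCont D t"
  unfolding D_def[abs_def] mdist_def mink_def using isCont_\<eta> by (intro continuous_intros) auto

lemma exists_before_\<tau>0: "\<exists>s\<in>I. s < \<tau>0"
proof (cases a)
  case (real a0)
  with \<tau>0 have "(a0 + \<tau>0) / 2 \<in> I" "(a0 + \<tau>0) / 2 < \<tau>0"
    by (auto simp: dom_I_def intro: le_less_trans[of _ "ereal \<tau>0"])
  then show ?thesis by blast
next
  case MInf
  with \<tau>0 have "\<tau>0 - 1 \<in> I" by (auto simp: dom_I_def intro: le_less_trans[of _ "ereal \<tau>0"])
  then show ?thesis by force
qed (use \<tau>0 in \<open>simp add: dom_I_def\<close>)

lemma time_sep_increment:
  assumes "s \<in> I" "t \<in> I" "s \<le> t"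
  shows "t - s \<le> time_sep t - time_sep s"
proof -
  have "(\<lambda>x. time_sep x - x) s \<le> (\<lambda>x. time_sep x - x) t"
  proof (rule DERIV_nonneg_imp_nondecreasing[OF \<open>s \<le> t\<close>])
    fix x assume "s \<le> x" "x \<le> t"
    then have "x \<in> I" using I_between assms by blast
    have "1 \<le> vel_t x"
      using vel_t_square[OF \<open>x \<in> I\<close>] vel_t_pos[OF \<open>x \<in> I\<close>]
      by (intro power2_le_imp_le[of 1]) auto
    with \<open>x \<in> I\<close> show "\<exists>y. ((\<lambda>x. time_sep x - x) has_real_derivative y) (at x) \<and> 0 \<le> y"
      by (intro exI[of _ "vel_t x - 1"]) (auto intro!: derivative_eq_intros has_real_derivative_time_sep)
  qed
  then show ?thesis by simp
qed

text \<open>An infinite past forces the null coordinates to grow without bound \<dots>\<close>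
lemma null_sum_unbounded_at_infinite_past:
  assumes "a = -\<infinity>" and "s \<in> I"
  shows "\<exists>t\<in>I. t \<le> s \<and> null_p t + null_q t > K"
proof -
  define t where "t = s - \<bar>K\<bar> - \<bar>null_p s + null_q s\<bar> - 1"
  have "t \<in> I" "t \<le> s"
    using assms unfolding t_def dom_I_def by (auto intro: le_less_trans[of _ "ereal s"])
  have "null_p t + null_q t = null_p s + null_q s + 2 * (time_sep s - time_sep t)"
    by (simp add: null_p_def null_q_def)
  then have "null_p s + null_q s + 2 * (s - t) \<le> null_p t + null_q t"
    using time_sep_increment[OF \<open>t \<in> I\<close> \<open>s \<in> I\<close> \<open>t \<le> s\<close>] by simp
  moreover have "s - t = \<bar>K\<bar> + \<bar>null_p s + null_q s\<bar> + 1" by (simp add: t_def)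
  ultimately have "null_p t + null_q t > K"
    using abs_ge_self[of K] abs_ge_zero[of K] abs_ge_zero[of "null_p s + null_q s"]
      abs_ge_minus_self[of "null_p s + null_q s"] by argo
  with \<open>t \<in> I\<close> \<open>t \<le> s\<close> show ?thesis by blast
qed

text \<open>\<dots> while at a finite past endpoint bounded null coordinates would give \<open>\<xi>\<close> a limit.\<close>
lemma null_coords_unbounded_at_finite_past:
  assumes "a = ereal a0" and "s \<in> I"
    and bounded: "\<And>t. t \<in> I \<Longrightarrow> t \<le> s \<Longrightarrow> null_p t \<le> B \<and> null_q t \<le> B"
  shows False
proof -
  have "a0 < s" using assms unfolding dom_I_def by simp
  have I: "t \<in> I" if "a0 < t" "t \<le> s" for t
    using that assms unfolding dom_I_def by (auto intro: le_less_trans[of _ "ereal s"])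
  have "\<exists>lp. (null_p \<longlongrightarrow> lp) (at_right a0)" "\<exists>lq. (null_q \<longlongrightarrow> lq) (at_right a0)"
    by (intro antimono_bounded_has_limit_at_right[OF \<open>a0 < s\<close>, where B=B];
        use I bounded null_p_antimono null_q_antimono in \<open>simp add: less_le_trans\<close>)+
  then obtain lp lq where "(null_p \<longlongrightarrow> lp) (at_right a0)" "(null_q \<longlongrightarrow> lq) (at_right a0)"
    by blast
  then have "((\<lambda>t. \<eta> \<tau>0 + (- (null_p t + null_q t) / 2, ((null_q t - null_p t) / 2) *\<^sub>R dir)) \<longlongrightarrow>
      \<eta> \<tau>0 + (- (lp + lq) / 2, ((lq - lp) / 2) *\<^sub>R dir)) (at_right a0)"
    by (intro tendsto_intros) simp_all
  moreover have "eventually (\<lambda>t. \<eta> \<tau>0 + (- (null_p t + null_q t) / 2, ((null_q t - null_p t) / 2) *\<^sub>R dir)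
      = \<eta> t) (at_right a0)"
    unfolding eventually_at_right_field using \<open>a0 < s\<close>
    by (intro exI[of _ s]) (auto simp: \<eta>_eq_null_coords[OF I])
  ultimately obtain l where "(\<eta> \<longlongrightarrow> l) (at_right a0)" using Lim_transform_eventually by blast
  then have lim: "((\<lambda>t. \<eta> t - c) \<longlongrightarrow> l - c) (at_right a0)" by (intro tendsto_intros)
  obtain g where "continuous_on UNIV g" "\<And>x. g (L x) = x"
    using mink_preserving_left_inverse L_mink by blast
  then have "((\<lambda>t. g (\<eta> t - c)) \<longlongrightarrow> g (l - c)) (at_right a0)"
    using continuous_on_tendsto_compose[OF \<open>continuous_on UNIV g\<close> lim] by simp
  then have "(\<xi> \<longlongrightarrow> g (l - c)) (at_right a0)"
    unfolding \<eta>_def using \<open>\<And>x. g (L x) = x\<close> by simp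
  with worldline assms(1) show False unfolding worldline_def inextendible_def by blast
qed

lemma null_coords_le_if_D_le:
  assumes "s \<in> I" "s < \<tau>0" "t \<in> I" "t \<le> s" "D t \<le> Z"
  shows "null_p t \<le> Z\<^sup>2 / null_q s" "null_q t \<le> Z\<^sup>2 / null_p s"
proof -
  have "t < \<tau>0" using assms by simp
  have ps: "null_p s \<le> null_p t" and qs: "null_q s \<le> null_q t"
    using null_p_antimono null_q_antimono assms by auto
  have "0 < null_p s" "0 < null_q s" "0 < null_p t" "0 < null_q t"
    using null_p_pos null_q_pos assms \<open>t < \<tau>0\<close> by auto
  have "sqrt (null_p t * null_q t) \<le> Z" using assms D_eq by simp
  then have "(sqrt (null_p t * null_q t))\<^sup>2 \<le> Z\<^sup>2"
    using \<open>0 < null_p t\<close> \<open>0 < null_q t\<close> by (intro power_mono) simp_all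
  then have pq: "null_p t * null_q t \<le> Z\<^sup>2" using \<open>0 < null_p t\<close> \<open>0 < null_q t\<close> by simp
  have "null_p t * null_q s \<le> Z\<^sup>2"
    using mult_left_mono[OF qs] \<open>0 < null_p t\<close> pq by (meson less_imp_le order_trans)
  moreover have "null_p s * null_q t \<le> Z\<^sup>2"
    using mult_right_mono[OF ps] \<open>0 < null_q t\<close> pq by (meson less_imp_le order_trans)
  ultimately show "null_p t \<le> Z\<^sup>2 / null_q s" "null_q t \<le> Z\<^sup>2 / null_p s"
    using \<open>0 < null_p s\<close> \<open>0 < null_q s\<close> by (simp_all add: pos_le_divide_eq mult.commute)
qed

lemma D_unbounded: "\<exists>t\<in>I. t < \<tau>0 \<and> D t > Z"
proof (rule ccontr)
  assume "\<not> ?thesis"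
  then have D_le: "D t \<le> Z" if "t \<in> I" "t < \<tau>0" for t using that by force
  obtain s where "s \<in> I" "s < \<tau>0" using exists_before_\<tau>0 by blast
  define B where "B = Z\<^sup>2 / null_q s + Z\<^sup>2 / null_p s"
  have "0 \<le> Z\<^sup>2 / null_q s" "0 \<le> Z\<^sup>2 / null_p s"
    using null_p_pos[OF \<open>s \<in> I\<close> \<open>s < \<tau>0\<close>] null_q_pos[OF \<open>s \<in> I\<close> \<open>s < \<tau>0\<close>] by simp_all
  then have bounded: "null_p t \<le> B \<and> null_q t \<le> B" if "t \<in> I" "t \<le> s" for t
    using null_coords_le_if_D_le[OF \<open>s \<in> I\<close> \<open>s < \<tau>0\<close> that D_le] that \<open>s < \<tau>0\<close>
    unfolding B_def by fastforce
  show False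
  proof (cases a)
    case (real a0)
    with null_coords_unbounded_at_finite_past bounded \<open>s \<in> I\<close> show False by blast
  next
    case MInf
    then obtain t where "t \<in> I" "t \<le> s" "null_p t + null_q t > 2 * B"
      using null_sum_unbounded_at_infinite_past \<open>s \<in> I\<close> by blast
    with bounded show False by fastforce
  qed (use \<tau>0 in \<open>simp add: dom_I_def\<close>)
qed

abbreviation past_time :: "real \<Rightarrow> real" where "past_time \<equiv> varpi a \<eta> \<tau>0"

lemma varpi_condition_iff:
  "(a < ereal t \<and> t < \<tau>0 \<and> mdist (\<eta> \<tau>0 - \<eta> t) = \<zeta>) \<longleftrightarrow> (t \<in> I \<and> t < \<tau>0 \<and> D t = \<zeta>)"
  using I_before_\<tau>0 unfolding D_def dom_I_def by auto

lemma D_inj: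
  assumes "s \<in> I" "t \<in> I" "s < \<tau>0" "t < \<tau>0" "D s = D t"
  shows "s = t"
  using D_decreasing[OF \<open>s \<in> I\<close>, of t] D_decreasing[OF \<open>t \<in> I\<close>, of s] assms
  by (cases s t rule: linorder_cases) auto

lemma ex1_D_eq:
  assumes "\<zeta> > 0"
  shows "\<exists>!t. t \<in> I \<and> t < \<tau>0 \<and> D t = \<zeta>"
proof -
  obtain s where "s \<in> I" "s < \<tau>0" "D s > \<zeta>" using D_unbounded by blast
  moreover have "continuous_on {s..\<tau>0} D"
    using \<open>s \<in> I\<close> by (intro continuous_at_imp_continuous_on ballI isCont_D) (auto intro: I_between[OF _ \<tau>0])
  ultimately obtain t where "s \<le> t" "t \<le> \<tau>0" "D t = \<zeta>"
    using IVT2'[of D \<tau>0 \<zeta> s] D_\<tau>0 assms by auto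
  moreover from this have "t \<noteq> \<tau>0" using D_\<tau>0 assms by auto
  ultimately have "t \<in> I \<and> t < \<tau>0 \<and> D t = \<zeta>" using I_between[OF \<open>s \<in> I\<close> \<tau>0] by auto
  then show ?thesis using D_inj by blast
qed

lemma past_time:
  assumes "\<zeta> > 0"
  shows "past_time \<zeta> \<in> I" "past_time \<zeta> < \<tau>0" "D (past_time \<zeta>) = \<zeta>"
  using theI'[OF ex1_D_eq[OF assms]] unfolding varpi_def varpi_condition_iff by auto

lemma past_time_D: "t \<in> I \<Longrightarrow> t < \<tau>0 \<Longrightarrow> past_time (D t) = t"
  unfolding varpi_def varpi_condition_iff by (rule the_equality) (auto intro: D_inj)

lemma isCont_past_time:
  assumes "\<zeta> > 0"
  shows "isCont past_time \<zeta>"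
proof -
  have "open (I \<inter> {..<\<tau>0})" by (intro open_Int open_I open_lessThan)
  then obtain d where "d > 0" and d: "cball (past_time \<zeta>) d \<subseteq> I \<inter> {..<\<tau>0}"
    using past_time[OF assms] open_contains_cball by blast
  then have near: "z \<in> I" "z < \<tau>0" if "\<bar>z - past_time \<zeta>\<bar> \<le> d" for z
    using that by (auto simp: dist_real_def subset_iff)
  have "isCont past_time (D (past_time \<zeta>))"
    using \<open>d > 0\<close> by (rule isCont_inverse_function) (auto intro: past_time_D isCont_D dest: near)
  then show ?thesis using past_time(3)[OF assms] by simp
qed

definition sep_ratio :: "real \<Rightarrow> real" where
  "sep_ratio \<zeta> = space_sep (past_time \<zeta>) / time_sep (past_time \<zeta>)"
definition vel_ratio :: "real \<Rightarrow> real" where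
  "vel_ratio \<zeta> = vel_x (past_time \<zeta>) / vel_t (past_time \<zeta>)"

lemma time_sep_neg: "t \<in> I \<Longrightarrow> t < \<tau>0 \<Longrightarrow> time_sep t < 0 \<and> \<bar>space_sep t\<bar> < - time_sep t"
  using null_p_pos[of t] null_q_pos[of t] unfolding null_p_def null_q_def by auto

lemma tanh_psi_mu:
  assumes "\<zeta> > 0"
  shows "tanh (psi a \<eta> \<tau>0 \<zeta>) *\<^sub>R mu a \<eta> \<tau>0 \<zeta> = sep_ratio \<zeta> *\<^sub>R dir"
proof -
  define t where "t = past_time \<zeta>"
  have t: "t \<in> I" "t < \<tau>0" "D t = \<zeta>" using past_time[OF assms] unfolding t_def by auto
  define v where "v = (1 / \<zeta>) *\<^sub>R (\<eta> \<tau>0 - \<eta> t)"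
  have "\<eta> \<tau>0 - \<eta> t = - (\<eta> t - \<eta> \<tau>0)" by simp
  then have diff: "\<eta> \<tau>0 - \<eta> t = (- time_sep t, (- space_sep t) *\<^sub>R dir)"
    unfolding \<eta>_diff_eq[OF t(1)] by simp
  have "time_sep t < 0" using time_sep_neg[OF t(1,2)] by simp
  then have "fst v > 0" using assms unfolding v_def diff by (simp add: divide_neg_pos)
  have "null_p t * null_q t = \<zeta>\<^sup>2"
    using t(3) D_eq[OF t(1)] null_p_pos[OF t(1,2)] null_q_pos[OF t(1,2)] by force
  moreover have "mink (\<eta> \<tau>0 - \<eta> t) (\<eta> \<tau>0 - \<eta> t) = - (null_p t * null_q t)"
    unfolding diff mink_self null_p_def null_q_def using norm_dir by (simp add: power2_eq_square algebra_simps)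
  ultimately have "mink (\<eta> \<tau>0 - \<eta> t) (\<eta> \<tau>0 - \<eta> t) = - \<zeta>\<^sup>2" by simp
  then have "mink v v = -1" unfolding v_def mink_scaleR using assms by (simp add: power2_eq_square)
  have "tanh (psi a \<eta> \<tau>0 \<zeta>) *\<^sub>R mu a \<eta> \<tau>0 \<zeta> = (1 / fst v) *\<^sub>R snd v"
    unfolding psi_def mu_def t_def[symmetric] v_def[symmetric] by (rule tanh_rap_dir[OF \<open>fst v > 0\<close> \<open>mink v v = -1\<close>])
  also have "\<dots> = sep_ratio \<zeta> *\<^sub>R dir"
    unfolding v_def diff sep_ratio_def t_def[symmetric] using assms \<open>time_sep t < 0\<close> by (simp add: field_simps)
  finally show ?thesis .
qed

lemma tanh_chi_nu:
  assumes "\<zeta> > 0"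
  shows "tanh (chi a \<eta> \<tau>0 \<zeta>) *\<^sub>R nu a \<eta> \<tau>0 \<zeta> = vel_ratio \<zeta> *\<^sub>R dir"
proof -
  define t where "t = past_time \<zeta>"
  have "t \<in> I" using past_time[OF assms] unfolding t_def by auto
  have "vector_derivative \<eta> (at t) = vel t"
    by (rule vector_derivative_at[OF has_vector_derivative_\<eta>[OF \<open>t \<in> I\<close>]])
  then have "tanh (chi a \<eta> \<tau>0 \<zeta>) *\<^sub>R nu a \<eta> \<tau>0 \<zeta> = (1 / fst (vel t)) *\<^sub>R snd (vel t)"
    unfolding chi_def nu_def t_def[symmetric]
    using vel_t_pos[OF \<open>t \<in> I\<close>] mink_vel[OF \<open>t \<in> I\<close>] by (simp add: tanh_rap_dir vel_t_def)
  then show ?thesis unfolding vel_ratio_def t_def[symmetric] vel_eq[OF \<open>t \<in> I\<close>] by simp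
qed

lemma abs_sep_ratio_less:
  assumes "\<zeta> > 0"
  shows "\<bar>sep_ratio \<zeta>\<bar> < 1"
proof -
  have "time_sep (past_time \<zeta>) < 0" "\<bar>space_sep (past_time \<zeta>)\<bar> < - time_sep (past_time \<zeta>)"
    using time_sep_neg[OF past_time(1,2)[OF assms]] by auto
  then show ?thesis unfolding sep_ratio_def abs_div by (simp add: neg_less_divide_eq)
qed

lemma abs_vel_ratio_less:
  assumes "\<zeta> > 0"
  shows "\<bar>vel_ratio \<zeta>\<bar> < 1"
  using abs_vel_x_less[OF past_time(1)[OF assms]] vel_t_pos[OF past_time(1)[OF assms]]
  unfolding vel_ratio_def by (simp add: abs_div)

lemma isCont_comp_past_time:
  assumes "\<zeta> > 0" and "\<And>t. t \<in> I \<Longrightarrow> isCont f t"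
  shows "isCont (\<lambda>\<zeta>. f (past_time \<zeta>)) \<zeta>"
  using continuous_at_compose[OF isCont_past_time[OF assms(1)] assms(2)[OF past_time(1)[OF assms(1)]]]
  by (simp add: o_def)

lemma isCont_sep_ratio:
  assumes "\<zeta> > 0"
  shows "isCont sep_ratio \<zeta>"
proof -
  have "isCont (\<lambda>\<zeta>. space_sep (past_time \<zeta>)) \<zeta>" "isCont (\<lambda>\<zeta>. time_sep (past_time \<zeta>)) \<zeta>"
    using assms has_real_derivative_space_sep has_real_derivative_time_sep
    by (blast intro: isCont_comp_past_time DERIV_isCont)+
  then show ?thesis
    unfolding sep_ratio_def[abs_def] using time_sep_neg[OF past_time(1,2)[OF assms]]
    by (intro continuous_intros) auto
qed

lemma isCont_vel_ratio:
  assumes "\<zeta> > 0"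
  shows "isCont vel_ratio \<zeta>"
proof -
  have "isCont (\<lambda>\<zeta>. vel_x (past_time \<zeta>)) \<zeta>" "isCont (\<lambda>\<zeta>. vel_t (past_time \<zeta>)) \<zeta>"
    using assms isCont_vel_x isCont_vel_t by (blast intro: isCont_comp_past_time)+
  then show ?thesis
    unfolding vel_ratio_def[abs_def] using vel_t_pos[OF past_time(1)[OF assms]]
    by (intro continuous_intros) auto
qed

lemma Delta_eq:
  assumes "\<zeta> > 0"
  shows "Delta a \<eta> \<tau>0 \<zeta> = 1 - sep_ratio \<zeta> * vel_ratio \<zeta>"
proof -
  have "tanh (psi a \<eta> \<tau>0 \<zeta>) * tanh (chi a \<eta> \<tau>0 \<zeta>) * (mu a \<eta> \<tau>0 \<zeta> \<bullet> nu a \<eta> \<tau>0 \<zeta>)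
      = (tanh (psi a \<eta> \<tau>0 \<zeta>) *\<^sub>R mu a \<eta> \<tau>0 \<zeta>) \<bullet> (tanh (chi a \<eta> \<tau>0 \<zeta>) *\<^sub>R nu a \<eta> \<tau>0 \<zeta>)"
    by (simp add: algebra_simps)
  also have "\<dots> = sep_ratio \<zeta> * vel_ratio \<zeta>"
    unfolding tanh_psi_mu[OF assms] tanh_chi_nu[OF assms] using norm_dir by (simp add: norm_eq_1)
  finally show ?thesis unfolding Delta_def by simp
qed

definition reduced_integrand :: "real \<Rightarrow> 3 \<Rightarrow> real \<Rightarrow> real" where
  "reduced_integrand ell \<sigma> \<zeta> = (sep_ratio \<zeta> - vel_ratio \<zeta>) * dir $ \<sigma> / (1 - sep_ratio \<zeta> * vel_ratio \<zeta>)
     * (besselJ2 (\<zeta> / ell) / \<zeta>)"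

lemma integrand_eq_reduced_integrand:
  assumes "\<zeta> > 0"
  shows "(tanh (psi a \<eta> \<tau>0 \<zeta>) * mu a \<eta> \<tau>0 \<zeta> $ \<sigma> - tanh (chi a \<eta> \<tau>0 \<zeta>) * nu a \<eta> \<tau>0 \<zeta> $ \<sigma>)
      * besselJ2 (\<zeta> / ell) / (Delta a \<eta> \<tau>0 \<zeta> * \<zeta>) = reduced_integrand ell \<sigma> \<zeta>"
proof -
  have "1 - sep_ratio \<zeta> * vel_ratio \<zeta> > 0"
    using one_minus_mult_pos abs_sep_ratio_less abs_vel_ratio_less assms by blast
  then show ?thesis
    using arg_cong[OF tanh_psi_mu[OF assms], of "\<lambda>v. v $ \<sigma>"] arg_cong[OF tanh_chi_nu[OF assms], of "\<lambda>v. v $ \<sigma>"]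
      assms unfolding reduced_integrand_def Delta_eq[OF assms] by (simp add: field_simps)
qed

lemma continuous_on_reduced_integrand:
  assumes "ell > 0"
  shows "continuous_on {0<..} (reduced_integrand ell \<sigma>)"
proof (intro continuous_at_imp_continuous_on ballI)
  fix \<zeta> :: real
  assume "\<zeta> \<in> {0<..}"
  then have "\<zeta> > 0" by simp
  have "isCont (\<lambda>\<zeta>. \<zeta> / ell) \<zeta>" using \<open>ell > 0\<close> by (intro continuous_intros) simp
  from continuous_at_compose[OF this DERIV_isCont[OF has_real_derivative_besselJ2]]
  have "isCont (\<lambda>\<zeta>. besselJ2 (\<zeta> / ell)) \<zeta>" by (simp add: o_def)
  moreover have "1 - sep_ratio \<zeta> * vel_ratio \<zeta> > 0"
    using one_minus_mult_pos abs_sep_ratio_less abs_vel_ratio_less \<open>\<zeta> > 0\<close> by blast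
  ultimately show "isCont (reduced_integrand ell \<sigma>) \<zeta>"
    unfolding reduced_integrand_def[abs_def] using \<open>\<zeta> > 0\<close>
    by (intro continuous_intros isCont_sep_ratio isCont_vel_ratio) auto
qed

lemma abs_reduced_integrand_le:
  assumes "\<zeta> > 0"
  shows "\<bar>reduced_integrand ell \<sigma> \<zeta>\<bar> \<le> \<bar>besselJ2 (\<zeta> / ell)\<bar> / \<zeta>"
proof -
  have "\<bar>dir $ \<sigma>\<bar> \<le> 1" using component_le_norm_cart[of dir \<sigma>] norm_dir by simp
  with assms have "\<bar>(sep_ratio \<zeta> - vel_ratio \<zeta>) * dir $ \<sigma> / (1 - sep_ratio \<zeta> * vel_ratio \<zeta>)\<bar> \<le> 1"
    by (intro abs_relative_velocity_component_le abs_sep_ratio_less abs_vel_ratio_less)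
  moreover have "\<bar>besselJ2 (\<zeta> / ell) / \<zeta>\<bar> = \<bar>besselJ2 (\<zeta> / ell)\<bar> / \<zeta>"
    using assms by (simp add: abs_div)
  ultimately show ?thesis
    unfolding reduced_integrand_def abs_mult using assms by (metis mult_left_le_one_le abs_ge_zero)
qed

lemma absolutely_integrable_integrand:
  assumes "ell > 0"
  shows "(\<lambda>\<zeta>. (tanh (psi a \<eta> \<tau>0 \<zeta>) * mu a \<eta> \<tau>0 \<zeta> $ \<sigma> - tanh (chi a \<eta> \<tau>0 \<zeta>) * nu a \<eta> \<tau>0 \<zeta> $ \<sigma>)
      * besselJ2 (\<zeta> / ell) / (Delta a \<eta> \<tau>0 \<zeta> * \<zeta>)) absolutely_integrable_on {0<..}"
proof -
  have "reduced_integrand ell \<sigma> absolutely_integrable_on {0<..}"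
    by (rule absolutely_integrable_besselJ2_dominated[OF assms continuous_on_reduced_integrand[OF assms]
          abs_reduced_integrand_le])
  then show ?thesis
    by (rule absolutely_integrable_spike[of _ _ "{}"]) (auto simp: integrand_eq_reduced_integrand)
qed

end

theorem proposition3:
  fixes ell :: real and a b :: ereal and \<xi> :: "real \<Rightarrow> event" and P :: "event set"
  assumes "ell > 0"
    and "worldline a b \<xi>"
    and "timelike_plane P"
    and "\<forall>t\<in>dom_I a b. \<xi> t \<in> P"
  shows "\<forall>\<tau>0\<in>dom_I a b. \<forall>L c. lorentz_orthochronous L \<longrightarrow>
           (let \<xi>' = (\<lambda>t. L (\<xi> t) + c) in
             (\<xi>' has_vector_derivative e0) (at \<tau>0) \<longrightarrow>
             (\<forall>\<sigma> :: 3.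
               (\<lambda>\<zeta>. (tanh (psi a \<xi>' \<tau>0 \<zeta>) * (mu a \<xi>' \<tau>0 \<zeta>) $ \<sigma>
                      - tanh (chi a \<xi>' \<tau>0 \<zeta>) * (nu a \<xi>' \<tau>0 \<zeta>) $ \<sigma>)
                     * besselJ2 (\<zeta> / ell) / (Delta a \<xi>' \<tau>0 \<zeta> * \<zeta>))
               absolutely_integrable_on {0<..}))"
proof (intro ballI allI impI, unfold Let_def, intro impI allI)
  fix \<tau>0 L c and \<sigma> :: 3
  assume "\<tau>0 \<in> dom_I a b" "lorentz_orthochronous L"
    and "((\<lambda>t. L (\<xi> t) + c) has_vector_derivative e0) (at \<tau>0)"
  moreover obtain p u w where "P = {p + s *\<^sub>R u + t *\<^sub>R w | s t. True}"
    using \<open>timelike_plane P\<close> unfolding timelike_plane_def by blast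
  ultimately interpret planar_worldline a b \<xi> p u w \<tau>0 L c
    using assms(2,4) unfolding lorentz_orthochronous_def by (intro planar_worldline.intro) auto
  show "(\<lambda>\<zeta>. (tanh (psi a (\<lambda>t. L (\<xi> t) + c) \<tau>0 \<zeta>) * mu a (\<lambda>t. L (\<xi> t) + c) \<tau>0 \<zeta> $ \<sigma>
      - tanh (chi a (\<lambda>t. L (\<xi> t) + c) \<tau>0 \<zeta>) * nu a (\<lambda>t. L (\<xi> t) + c) \<tau>0 \<zeta> $ \<sigma>)
      * besselJ2 (\<zeta> / ell) / (Delta a (\<lambda>t. L (\<xi> t) + c) \<tau>0 \<zeta> * \<zeta>)) absolutely_integrable_on {0<..}"
    using absolutely_integrable_integrand[OF \<open>ell > 0\<close>] unfolding \<eta>_def[abs_def] .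
qed

end
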